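(* Let $\mu\geq\nu>-1$ and $x\in(0,\alpha_{\nu,1})$. Then $$2^\mu\Gamma(\mu+1)x^{-\mu}d_\mu(x)\ \ge\ 2^\nu\Gamma(\nu+1)x^{-\nu}d_\nu(x),\quad\text{i.e.}\quad x^{\nu-\mu}\frac{d_\mu(x)}{d_\nu(x)}\geq 2^{\nu-\mu}\frac{\Gamma(\nu+1)}{\Gamma(\mu+1)},$$ and $$\frac{d_\mu'(x)}{d_\mu(x)}\geq\frac{d_\nu'(x)}{d_\nu(x)}.$$ Moreover, the function $x\mapsto d_\mu(x)/d_\nu(x)$ is increasing on $(0,\alpha_{\nu,1})$.
   Context: $J_\nu$ denotes the Bessel function of the first kind of order $\nu$. The Dini function is $d_\nu(x)=(1-\nu)J_\nu(x)+xJ_\nu'(x)$, and $\alpha_{\nu,1}$ denotes its first positive zero (one has $\alpha_{\nu,1}\le\alpha_{\mu,1}$ for $\mu\ge\nu>-1$). *)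

theory Defs
  imports "HOL-Analysis.Analysis"
begin

definition bessel_J :: "real \<Rightarrow> real \<Rightarrow> real" where
  "bessel_J nu x = (\<Sum>n. (-1) ^ n / (fact n * Gamma (real n + nu + 1)) * (x / 2) powr (2 * real n + nu))"

definition dini :: "real \<Rightarrow> real \<Rightarrow> real" where
  "dini nu x = (1 - nu) * bessel_J nu x + x * deriv (bessel_J nu) x"

definition dini_zero1 :: "real \<Rightarrow> real" where
  "dini_zero1 nu = Inf {x. 0 < x \<and> dini nu x = 0}"

end

theory Submission
  imports Defs
begin

text \<open>
  Write J_nu(x) = x^nu G(x^2) / (2^nu Gamma(nu + 1)) with an entire power series G satisfying
  4 y G'' + 4 (nu + 1) G' + G = 0. Then d_nu(x) = x^nu W_nu(x) / (2^nu Gamma(nu + 1)) with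
  W_nu(t) = G(t^2) + 2 t^2 G'(t^2), W_nu(0) = 1, and the negative logarithmic derivative
  Q_nu = -W_nu'/W_nu is expressed through a solution V_nu of a Riccati equation.
  A comparison principle (a function that starts positive and can only cross zero upwards stays
  positive) shows V_nu > 0, Q_nu > 0, and that V and Q strictly decrease in the order.
  Hence W_mu / W_nu is increasing with value 1 at 0 for mu \<ge> nu, which by continuous induction
  also keeps W_mu positive below the first zero of d_nu. All four claims of the theorem follow
  by rewriting d_nu, d_nu' and d_mu / d_nu in terms of W and Q.
\<close>

lemma nonneg_at_left_limit:
  fixes g :: "real \<Rightarrow> real"
  assumes "isCont g s" and "\<forall>\<^sub>F t in at_left s. g t \<ge> 0"
  shows "g s \<ge> 0"
proof (rule tendsto_lowerbound[OF _ assms(2)])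
  show "(g \<longlongrightarrow> g s) (at_left s)"
    using assms(1) unfolding isCont_def by (rule tendsto_mono[OF at_le, rotated]) simp
qed simp

lemma positive_continuation:
  fixes f :: "real \<Rightarrow> real"
  assumes cont: "\<And>t. a < t \<Longrightarrow> t < b \<Longrightarrow> isCont f t"
    and start: "\<forall>\<^sub>F t in at_right a. f t > 0"
    and step: "\<And>s. a < s \<Longrightarrow> s < b \<Longrightarrow> (\<And>t. a < t \<Longrightarrow> t < s \<Longrightarrow> f t > 0) \<Longrightarrow> f s > 0"
    and t: "a < t" "t < b"
  shows "f t > 0"
proof (rule ccontr)
  assume "\<not> f t > 0"
  obtain e where e: "a < e" "\<And>r. a < r \<Longrightarrow> r < e \<Longrightarrow> f r > 0"
    using start by (auto simp: eventually_at_right_field)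
  define c where "c = (a + min e t) / 2"
  have c: "a < c" "c < e" "c \<le> t" using e(1) t(1) unfolding c_def by auto
  text \<open>The set of non-positive points in [c, t] is closed; its least element s is the
    first point where positivity fails.\<close>
  define S where "S = {c..t} \<inter> f -` {..0}"
  have "continuous_on {c..t} f"
    using c t by (intro continuous_at_imp_continuous_on ballI cont) auto
  then have "closed S" unfolding S_def by (intro continuous_closed_preimage) auto
  moreover have tS: "t \<in> S" using c \<open>\<not> f t > 0\<close> unfolding S_def by auto
  moreover have bdd: "bdd_below S" unfolding S_def by (rule bdd_belowI[of _ c]) auto
  ultimately have "Inf S \<in> S" by (intro closed_contains_Inf) auto
  then have s: "c \<le> Inf S" "Inf S \<le> t" "f (Inf S) \<le> 0" unfolding S_def by auto
  have "f r > 0" if "a < r" "r < Inf S" for r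
  proof (cases "r < c")
    case False
    then have "r \<notin> S" using cInf_lower[OF _ bdd, of r] that(2) by auto
    then show ?thesis using False that s(2) unfolding S_def by auto
  qed (use e(2) c that in auto)
  moreover have "a < Inf S" "Inf S < b" using c s t by linarith+
  ultimately have "f (Inf S) > 0" using step by blast
  with s(3) show False by simp
qed

lemma positive_by_crossing:
  fixes h h' :: "real \<Rightarrow> real"
  assumes deriv: "\<And>t. a < t \<Longrightarrow> t < b \<Longrightarrow> (h has_real_derivative h' t) (at t)"
    and start: "\<forall>\<^sub>F t in at_right a. h t > 0"
    and crossing: "\<And>t. a < t \<Longrightarrow> t < b \<Longrightarrow> h t = 0 \<Longrightarrow> h' t > 0"
    and t: "a < t" "t < b"
  shows "h t > 0"
proof (rule positive_continuation[where f = h, OF _ start _ t])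
  show "isCont h t" if "a < t" "t < b" for t
    using DERIV_isCont[OF deriv[OF that]] .
next
  fix s assume s: "a < s" "s < b" and pos: "\<And>t. a < t \<Longrightarrow> t < s \<Longrightarrow> h t > 0"
  have "h s \<ge> 0"
  proof (rule nonneg_at_left_limit[where g = h])
    show "isCont h s" using DERIV_isCont[OF deriv[OF s]] .
    show "\<forall>\<^sub>F t in at_left s. h t \<ge> 0"
      unfolding eventually_at_left_field using s pos by (intro exI[of _ a]) (auto intro: less_imp_le)
  qed
  moreover have "h s \<noteq> 0"
  proof
    assume "h s = 0"
    then obtain d where d: "d > 0" "\<And>k. 0 < k \<Longrightarrow> k < d \<Longrightarrow> h (s - k) < 0"
      using DERIV_pos_inc_left[OF deriv[OF s] crossing[OF s]] by auto
    define k where "k = min d (s - a) / 2"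
    have "0 < k" "k < d" "k < s - a" using d(1) s unfolding k_def by auto
    then show False using d(2)[of k] pos[of "s - k"] by auto
  qed
  ultimately show "h s > 0" by simp
qed

lemma eventually_pos_at_right:
  fixes f :: "real \<Rightarrow> real"
  assumes "isCont f a" and "f a > 0"
  shows "\<forall>\<^sub>F t in at_right a. f t > 0"
  using order_tendstoD(1)[OF assms(1)[unfolded isCont_def] assms(2)]
  by (rule filter_leD[OF at_le, rotated]) simp

text \<open>The quantities compared below all vanish at 0 and have the form t * f t; if
  f 0 > 0 they are positive immediately to the right of 0.\<close>

lemma eventually_pos_at_right_0:
  fixes f :: "real \<Rightarrow> real"
  assumes "isCont f 0" and "f 0 > 0"
  shows "\<forall>\<^sub>F t in at_right 0. t * f t > 0"
  using eventually_pos_at_right[OF assms] eventually_at_right_less[of "0::real"]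
  by eventually_elim simp

text \<open>Normalised coefficients of the entire factor of the Bessel function:
  J_nu(x) = x^nu / (2^nu Gamma(nu + 1)) * G(x^2) with G(y) = sum of bessel_coeff nu n * y^n.\<close>

fun bessel_coeff :: "real \<Rightarrow> nat \<Rightarrow> real" where
  "bessel_coeff nu 0 = 1"
| "bessel_coeff nu (Suc n) = - bessel_coeff nu n / (4 * (real n + 1) * (real n + nu + 1))"

lemma bessel_coeff_recurrence:
  assumes "nu > -1"
  shows "4 * (real n + 1) * (real n + nu + 1) * bessel_coeff nu (Suc n) + bessel_coeff nu n = 0"
proof -
  have "4 * (real n + 1) * (real n + nu + 1) \<noteq> 0" using assms by (simp add: add_pos_pos)
  then show ?thesis by simp
qed

lemma bessel_coeff_Gamma:
  assumes "nu > -1"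
  shows "bessel_coeff nu n = (-1) ^ n * Gamma (nu + 1) / (fact n * Gamma (real n + nu + 1) * 4 ^ n)"
proof (induction n)
  case 0
  have "Gamma (nu + 1) > 0" using assms by simp
  then show ?case by simp
next
  case (Suc n)
  have pos: "real n + nu + 1 > 0" using assms by linarith
  then have "real n + nu + 1 \<notin> \<int>\<^sub>\<le>\<^sub>0" using nonpos_Ints_nonpos by fastforce
  then have "Gamma (real (Suc n) + nu + 1) = (real n + nu + 1) * Gamma (real n + nu + 1)"
    using Gamma_plus1[of "real n + nu + 1"] by (simp add: add_ac)
  moreover have "Gamma (real n + nu + 1) > 0" using pos by simp
  ultimately show ?case using pos unfolding bessel_coeff.simps Suc by (simp add: field_simps)
qed

lemma bessel_coeff_summable:
  assumes "nu > -1"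
  shows "summable (\<lambda>n. bessel_coeff nu n * y ^ n)"
proof (rule summable_ratio_test[where c = "1/2" and N = "nat \<lceil>\<bar>y\<bar>\<rceil> + 1"])
  fix n assume n: "n \<ge> nat \<lceil>\<bar>y\<bar>\<rceil> + 1"
  define D where "D = 4 * (real n + 1) * (real n + nu + 1)"
  have "real n + nu + 1 \<ge> \<bar>y\<bar>" using n assms by linarith
  moreover have "D \<ge> 2 * (real n + nu + 1)"
    unfolding D_def using assms by (intro mult_right_mono) auto
  moreover have pos: "real n + nu + 1 > 0" using assms by (simp add: add_pos_pos)
  ultimately have D: "D \<ge> 2 * \<bar>y\<bar>" "D > 0" by auto
  have "norm (bessel_coeff nu (Suc n) * y ^ Suc n) = norm (bessel_coeff nu n * y ^ n) * (\<bar>y\<bar> / D)"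
    using pos unfolding D_def by (simp add: abs_mult power_abs abs_divide)
  also have "\<dots> \<le> norm (bessel_coeff nu n * y ^ n) * (1/2)"
    using D by (intro mult_left_mono) (auto simp: field_simps)
  finally show "norm (bessel_coeff nu (Suc n) * y ^ Suc n) \<le> 1/2 * norm (bessel_coeff nu n * y ^ n)"
    by (simp add: mult.commute)
qed simp

definition besselG :: "real \<Rightarrow> real \<Rightarrow> real" where
  "besselG nu y = (\<Sum>n. bessel_coeff nu n * y ^ n)"
definition besselG' :: "real \<Rightarrow> real \<Rightarrow> real" where
  "besselG' nu y = (\<Sum>n. diffs (bessel_coeff nu) n * y ^ n)"
definition besselG'' :: "real \<Rightarrow> real \<Rightarrow> real" where
  "besselG'' nu y = (\<Sum>n. diffs (diffs (bessel_coeff nu)) n * y ^ n)"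

lemma besselG'_summable: "nu > -1 \<Longrightarrow> summable (\<lambda>n. diffs (bessel_coeff nu) n * y ^ n)"
  by (rule termdiff_converges_all) (rule bessel_coeff_summable)

lemma besselG''_summable: "nu > -1 \<Longrightarrow> summable (\<lambda>n. diffs (diffs (bessel_coeff nu)) n * y ^ n)"
  by (rule termdiff_converges_all) (rule besselG'_summable)

lemma besselG_deriv: "nu > -1 \<Longrightarrow> (besselG nu has_real_derivative besselG' nu y) (at y)"
  unfolding besselG_def besselG'_def
  by (rule termdiffs_strong_converges_everywhere) (rule bessel_coeff_summable)

lemma besselG'_deriv: "nu > -1 \<Longrightarrow> (besselG' nu has_real_derivative besselG'' nu y) (at y)"
  unfolding besselG'_def besselG''_def
  by (rule termdiffs_strong_converges_everywhere) (rule besselG'_summable)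

lemma besselG_0: "besselG nu 0 = 1"
  unfolding besselG_def using suminf_finite[of "{0}" "\<lambda>n. bessel_coeff nu n * 0 ^ n"] by simp

lemma besselG'_0: "besselG' nu 0 = - 1 / (4 * (nu + 1))"
  unfolding besselG'_def using suminf_finite[of "{0}" "\<lambda>n. diffs (bessel_coeff nu) n * 0 ^ n"]
  by (simp add: diffs_def)

text \<open>G solves 4 y G'' + 4 (nu + 1) G' + G = 0, the Bessel equation in the variable y = x^2.\<close>

lemma besselG_ode:
  assumes "nu > -1"
  shows "4 * y * besselG'' nu y + 4 * (nu + 1) * besselG' nu y + besselG nu y = 0"
proof -
  let ?c = "bessel_coeff nu"
  have "(\<lambda>n. y * (diffs (diffs ?c) n * y ^ n)) sums (y * besselG'' nu y)"
    unfolding besselG''_def by (intro sums_mult summable_sums besselG''_summable assms)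
  then have "(\<lambda>n. (real (Suc n) + 1) * real (Suc n) * ?c (Suc (Suc n)) * y ^ Suc n) sums (y * besselG'' nu y)"
    by (simp add: diffs_def algebra_simps del: bessel_coeff.simps)
  then have second: "(\<lambda>n. (real n + 1) * real n * ?c (Suc n) * y ^ n) sums (y * besselG'' nu y)"
    by (subst (asm) sums_Suc_iff) simp
  have first: "(\<lambda>n. (real n + 1) * ?c (Suc n) * y ^ n) sums besselG' nu y"
    unfolding besselG'_def using summable_sums[OF besselG'_summable[OF assms]]
    by (simp add: diffs_def add.commute del: bessel_coeff.simps)
  have zeroth: "(\<lambda>n. ?c n * y ^ n) sums besselG nu y"
    unfolding besselG_def by (rule summable_sums[OF bessel_coeff_summable[OF assms]])
  have "(\<lambda>n. 4 * ((real n + 1) * real n * ?c (Suc n) * y ^ n)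
          + 4 * (nu + 1) * ((real n + 1) * ?c (Suc n) * y ^ n) + ?c n * y ^ n)
        sums (4 * (y * besselG'' nu y) + 4 * (nu + 1) * besselG' nu y + besselG nu y)"
    by (intro sums_add sums_mult second first zeroth)
  moreover have "4 * ((real n + 1) * real n * ?c (Suc n) * y ^ n)
          + 4 * (nu + 1) * ((real n + 1) * ?c (Suc n) * y ^ n) + ?c n * y ^ n = 0" for n
  proof -
    have "4 * ((real n + 1) * real n * ?c (Suc n) * y ^ n)
          + 4 * (nu + 1) * ((real n + 1) * ?c (Suc n) * y ^ n) + ?c n * y ^ n
        = (4 * (real n + 1) * (real n + nu + 1) * ?c (Suc n) + ?c n) * y ^ n"
      by (simp add: algebra_simps del: bessel_coeff.simps)
    then show ?thesis by (simp only: bessel_coeff_recurrence[OF assms] mult_zero_left)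
  qed
  ultimately have "(\<lambda>n. 0) sums (4 * (y * besselG'' nu y) + 4 * (nu + 1) * besselG' nu y + besselG nu y)"
    by simp
  then show ?thesis using sums_unique2[OF _ sums_zero] by (simp add: mult.assoc)
qed

definition bessel_const :: "real \<Rightarrow> real" where
  "bessel_const nu = 1 / (2 powr nu * Gamma (nu + 1))"

lemma bessel_const_pos: "nu > -1 \<Longrightarrow> bessel_const nu > 0"
  unfolding bessel_const_def by simp

lemma bessel_J_eq:
  assumes "nu > -1" "x > 0"
  shows "bessel_J nu x = bessel_const nu * x powr nu * besselG nu (x^2)"
proof -
  have term_eq: "(-1) ^ n / (fact n * Gamma (real n + nu + 1)) * (x / 2) powr (2 * real n + nu)
      = (bessel_const nu * x powr nu) * (bessel_coeff nu n * (x^2) ^ n)" for n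
  proof -
    have "(x / 2) powr (2 * real n + nu) = (x / 2) powr real (2 * n) * (x / 2) powr nu"
      by (simp add: powr_add)
    also have "(x / 2) powr real (2 * n) = (x / 2) ^ (2 * n)"
      using assms by (simp only: powr_realpow)
    also have "(x / 2) ^ (2 * n) = (x^2) ^ n / 4 ^ n"
      by (simp add: power_mult power_divide)
    also have "(x / 2) powr nu = x powr nu / 2 powr nu"
      by (rule powr_divide)
    moreover have "Gamma (nu + 1) > 0" "Gamma (real n + nu + 1) > 0" using assms by (simp_all add: add_pos_pos)
    ultimately show ?thesis
      unfolding bessel_coeff_Gamma[OF assms(1)] bessel_const_def by (simp add: field_simps)
  qed
  have "(\<lambda>n. (bessel_const nu * x powr nu) * (bessel_coeff nu n * (x^2) ^ n))
      sums (bessel_const nu * x powr nu * besselG nu (x^2))"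
    unfolding besselG_def by (intro sums_mult summable_sums bessel_coeff_summable assms)
  then show ?thesis unfolding bessel_J_def term_eq[symmetric] by (simp add: sums_iff)
qed

lemma besselG_sq_deriv:
  "nu > -1 \<Longrightarrow> ((\<lambda>t. besselG nu (t^2)) has_real_derivative besselG' nu (t^2) * (2 * t)) (at t)"
  by (rule DERIV_chain2[OF besselG_deriv]) (auto intro!: derivative_eq_intros)

lemma besselG'_sq_deriv:
  "nu > -1 \<Longrightarrow> ((\<lambda>t. besselG' nu (t^2)) has_real_derivative besselG'' nu (t^2) * (2 * t)) (at t)"
  by (rule DERIV_chain2[OF besselG'_deriv]) (auto intro!: derivative_eq_intros)

text \<open>The normalised Dini function W(t) = G(t^2) + 2 t^2 G'(t^2), so that
  d_nu(x) = x^nu W(x) / (2^nu Gamma(nu + 1)); it is entire with W(0) = 1. Its derivative,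
  simplified with the differential equation of G, is dini_hat'.\<close>

definition dini_hat :: "real \<Rightarrow> real \<Rightarrow> real" where
  "dini_hat nu t = besselG nu (t^2) + 2 * t^2 * besselG' nu (t^2)"

definition dini_hat' :: "real \<Rightarrow> real \<Rightarrow> real" where
  "dini_hat' nu t = t * ((2 - 4 * nu) * besselG' nu (t^2) - besselG nu (t^2))"

lemma dini_hat_0: "dini_hat nu 0 = 1"
  unfolding dini_hat_def by (simp add: besselG_0)

lemma dini_hat_deriv:
  assumes "nu > -1"
  shows "(dini_hat nu has_real_derivative dini_hat' nu t) (at t)"
proof -
  let ?G = "besselG nu (t^2)" and ?G' = "besselG' nu (t^2)" and ?G'' = "besselG'' nu (t^2)"
  have ode: "4 * t^2 * ?G'' = - 4 * (nu + 1) * ?G' - ?G"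
    using besselG_ode[OF assms, of "t^2"] by linarith
  have "?G' * (2 * t) + (2 * t^2 * (?G'' * (2 * t)) + 2 * (2 * t) * ?G') = 6 * t * ?G' + t * (4 * t^2 * ?G'')"
    by (simp add: algebra_simps)
  also have "\<dots> = dini_hat' nu t"
    unfolding ode dini_hat'_def by (simp add: algebra_simps)
  finally have "?G' * (2 * t) + (2 * t^2 * (?G'' * (2 * t)) + 2 * (2 * t) * ?G') = dini_hat' nu t" .
  moreover have "(dini_hat nu has_real_derivative ?G' * (2 * t) + (2 * t^2 * (?G'' * (2 * t)) + 2 * (2 * t) * ?G')) (at t)"
    unfolding dini_hat_def
    by (intro DERIV_add besselG_sq_deriv DERIV_mult' besselG'_sq_deriv assms)
       (auto intro!: derivative_eq_intros)
  ultimately show ?thesis by simp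
qed

lemma dini_hat_isCont: "nu > -1 \<Longrightarrow> isCont (dini_hat nu) t"
  using DERIV_isCont[OF dini_hat_deriv] .

lemma bessel_J_deriv:
  assumes "nu > -1" "x > 0"
  shows "deriv (bessel_J nu) x
    = bessel_const nu * (nu * x powr (nu - 1) * besselG nu (x^2) + x powr nu * (besselG' nu (x^2) * (2 * x)))"
proof (rule DERIV_imp_deriv)
  have "((\<lambda>t. bessel_const nu * t powr nu * besselG nu (t^2)) has_real_derivative
      bessel_const nu * (nu * x powr (nu - 1) * besselG nu (x^2) + x powr nu * (besselG' nu (x^2) * (2 * x)))) (at x)"
    using assms by (auto intro!: derivative_eq_intros besselG_sq_deriv simp: algebra_simps)
  then show "(bessel_J nu has_real_derivative
      bessel_const nu * (nu * x powr (nu - 1) * besselG nu (x^2) + x powr nu * (besselG' nu (x^2) * (2 * x)))) (at x)"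
    by (rule has_field_derivative_transform_within_open[where S = "{0<..}"]) (use assms bessel_J_eq in auto)
qed

lemma dini_eq:
  assumes "nu > -1" "x > 0"
  shows "dini nu x = bessel_const nu * x powr nu * dini_hat nu x"
proof -
  have "x * x powr (nu - 1) = x powr nu"
    using assms by (simp add: powr_diff field_simps)
  then show ?thesis
    unfolding dini_def bessel_J_deriv[OF assms] bessel_J_eq[OF assms] dini_hat_def
    by (simp add: algebra_simps power2_eq_square)
qed

lemma dini_deriv:
  assumes "nu > -1" "x > 0"
  shows "deriv (dini nu) x = bessel_const nu * (nu * x powr (nu - 1) * dini_hat nu x + x powr nu * dini_hat' nu x)"
proof (rule DERIV_imp_deriv)
  have "((\<lambda>t. bessel_const nu * t powr nu * dini_hat nu t) has_real_derivative
      bessel_const nu * (nu * x powr (nu - 1) * dini_hat nu x + x powr nu * dini_hat' nu x)) (at x)"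
    using assms by (auto intro!: derivative_eq_intros dini_hat_deriv simp: algebra_simps)
  then show "(dini nu has_real_derivative
      bessel_const nu * (nu * x powr (nu - 1) * dini_hat nu x + x powr nu * dini_hat' nu x)) (at x)"
    by (rule has_field_derivative_transform_within_open[where S = "{0<..}"]) (use assms dini_eq in auto)
qed

text \<open>Q = -W'/W is the negative logarithmic derivative of W and
  V = -2 t G'(t^2) / W(t); then Q = t + (t^2 + 1 - 2 nu) V and V solves the Riccati equation
  V' = riccati_rhs nu t V, whence Q' = dini_Q' nu t. Near 0 both V and Q are t times a
  function (A, B) that is continuous at 0.\<close>

definition dini_A :: "real \<Rightarrow> real \<Rightarrow> real" where
  "dini_A nu t = -2 * besselG' nu (t^2) / dini_hat nu t"
definition dini_V :: "real \<Rightarrow> real \<Rightarrow> real" where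
  "dini_V nu t = -2 * t * besselG' nu (t^2) / dini_hat nu t"
definition dini_Q :: "real \<Rightarrow> real \<Rightarrow> real" where
  "dini_Q nu t = t + (t^2 + 1 - 2 * nu) * dini_V nu t"
definition dini_B :: "real \<Rightarrow> real \<Rightarrow> real" where
  "dini_B nu t = 1 + (t^2 + 1 - 2 * nu) * dini_A nu t"

definition riccati_rhs :: "real \<Rightarrow> real \<Rightarrow> real \<Rightarrow> real" where
  "riccati_rhs nu t v = 1 + (2 * t - (2 * nu + 1) / t) * v + (t^2 + 1 - 2 * nu) * v^2"
definition dini_Q' :: "real \<Rightarrow> real \<Rightarrow> real" where
  "dini_Q' nu t = 1 + 2 * t * dini_V nu t + (t^2 + 1 - 2 * nu) * riccati_rhs nu t (dini_V nu t)"

lemma dini_V_eq: "dini_V nu t = t * dini_A nu t"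
  unfolding dini_V_def dini_A_def by simp

lemma dini_Q_eq: "dini_Q nu t = t * dini_B nu t"
  unfolding dini_Q_def dini_B_def dini_V_eq by (simp add: algebra_simps)

lemma dini_hat'_eq: "dini_hat nu t \<noteq> 0 \<Longrightarrow> dini_hat' nu t = - dini_Q nu t * dini_hat nu t"
  unfolding dini_Q_def dini_V_def dini_hat'_def dini_hat_def by (simp add: field_simps)

text \<open>Continuity of A, B at 0 and their values there; they give the sign of V and Q near 0
  and, being strictly decreasing in nu, the sign of the differences as well.\<close>

lemma dini_A_isCont: "nu > -1 \<Longrightarrow> isCont (dini_A nu) 0"
  unfolding dini_A_def
  by (intro continuous_intros DERIV_isCont[OF besselG'_sq_deriv] dini_hat_isCont) (auto simp: dini_hat_0)

lemma dini_A_0: "nu > -1 \<Longrightarrow> dini_A nu 0 = 1 / (2 * (nu + 1))"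
  unfolding dini_A_def by (simp add: dini_hat_0 besselG'_0 field_simps)

lemma dini_B_isCont: "nu > -1 \<Longrightarrow> isCont (dini_B nu) 0"
  unfolding dini_B_def by (intro continuous_intros dini_A_isCont)

lemma dini_B_0: "nu > -1 \<Longrightarrow> dini_B nu 0 = 3 / (2 * (nu + 1))"
  unfolding dini_B_def by (simp add: dini_A_0 field_simps)

lemma riccati_identity:
  fixes a b t nu :: real
  assumes "t \<noteq> 0" "a + 2 * t^2 * b \<noteq> 0"
  shows "((a + (4 * nu + 2) * b) * (a + 2 * t^2 * b) - (-2 * t * b) * (t * ((2 - 4 * nu) * b - a)))
           / ((a + 2 * t^2 * b) * (a + 2 * t^2 * b))
     = riccati_rhs nu t (-2 * t * b / (a + 2 * t^2 * b))"
proof -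
  define w where "w = a + 2 * t^2 * b"
  have a: "a = w - 2 * t^2 * b" unfolding w_def by simp
  have "w \<noteq> 0" using assms(2) unfolding w_def .
  then show ?thesis
    unfolding w_def[symmetric] riccati_rhs_def unfolding a
    using assms(1) by (simp add: field_simps power2_eq_square)
qed

lemma dini_V_deriv:
  assumes "nu > -1" "t \<noteq> 0" "dini_hat nu t \<noteq> 0"
  shows "(dini_V nu has_real_derivative riccati_rhs nu t (dini_V nu t)) (at t)"
proof -
  let ?G = "besselG nu (t^2)" and ?G' = "besselG' nu (t^2)" and ?G'' = "besselG'' nu (t^2)"
  have num: "((\<lambda>t. -2 * t * besselG' nu (t^2)) has_real_derivative (-2 * t) * (?G'' * (2 * t)) + (-2) * ?G') (at t)"
    by (rule DERIV_mult'[OF _ besselG'_sq_deriv[OF assms(1)]]) (auto intro!: derivative_eq_intros)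
  have "(dini_V nu has_real_derivative
      (((-2 * t) * (?G'' * (2 * t)) + (-2) * ?G') * dini_hat nu t - (-2 * t * ?G') * dini_hat' nu t)
        / (dini_hat nu t * dini_hat nu t)) (at t)"
    unfolding dini_V_def[abs_def] by (rule DERIV_divide[OF num dini_hat_deriv[OF assms(1)] assms(3)])
  moreover have "4 * t^2 * ?G'' = - 4 * (nu + 1) * ?G' - ?G"
    using besselG_ode[OF assms(1), of "t^2"] by linarith
  then have "(-2 * t) * (?G'' * (2 * t)) + (-2) * ?G' = ?G + (4 * nu + 2) * ?G'"
    by (simp add: algebra_simps power2_eq_square)
  ultimately show ?thesis
    using riccati_identity[OF assms(2), of ?G ?G' nu] assms(3)
    unfolding dini_hat_def dini_hat'_def dini_V_def by simp
qed

lemma dini_Q_deriv: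
  assumes "nu > -1" "t \<noteq> 0" "dini_hat nu t \<noteq> 0"
  shows "(dini_Q nu has_real_derivative dini_Q' nu t) (at t)"
  unfolding dini_Q_def[abs_def] dini_Q'_def
  by (auto intro!: derivative_eq_intros dini_V_deriv[OF assms] simp: algebra_simps)

text \<open>The Riccati right-hand side in terms of (t^2 + 1 - 2 nu) V, the quantity pinned down
  at a zero of Q.\<close>

lemma scaled_riccati_rhs:
  "(t^2 + 1 - 2 * nu) * riccati_rhs nu t v
     = (t^2 + 1 - 2 * nu) + (2 * t - (2 * nu + 1) / t) * ((t^2 + 1 - 2 * nu) * v) + ((t^2 + 1 - 2 * nu) * v)^2"
proof -
  have "D * (1 + p * v + D * v^2) = D + p * (D * v) + (D * v)^2" for D p :: real
    by (simp add: algebra_simps power2_eq_square)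
  then show ?thesis unfolding riccati_rhs_def .
qed

text \<open>V is positive wherever W has no zero: at a zero of V its derivative is 1.\<close>

lemma dini_V_pos:
  assumes nu: "nu > -1" and W: "\<And>t. 0 < t \<Longrightarrow> t < Y \<Longrightarrow> dini_hat nu t \<noteq> 0"
    and t: "0 < t" "t < Y"
  shows "dini_V nu t > 0"
proof (rule positive_by_crossing[where h' = "\<lambda>t. riccati_rhs nu t (dini_V nu t)", OF _ _ _ t])
  show "(dini_V nu has_real_derivative riccati_rhs nu t (dini_V nu t)) (at t)" if "0 < t" "t < Y" for t
    using dini_V_deriv[OF nu] W that by simp
  show "\<forall>\<^sub>F t in at_right 0. dini_V nu t > 0"
    unfolding dini_V_eq using nu by (intro eventually_pos_at_right_0 dini_A_isCont) (simp_all add: dini_A_0)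
  show "riccati_rhs nu t (dini_V nu t) > 0" if "dini_V nu t = 0" for t
    using that by (simp add: riccati_rhs_def)
qed

text \<open>V decreases in the order: if V_nu = V_mu at some t, the difference of the Riccati
  right-hand sides is 2 (mu - nu) (V/t + V^2) > 0.\<close>

lemma dini_V_order:
  assumes nu: "nu > -1" and mu: "mu > nu"
    and Wn: "\<And>t. 0 < t \<Longrightarrow> t < Y \<Longrightarrow> dini_hat nu t \<noteq> 0"
    and Wm: "\<And>t. 0 < t \<Longrightarrow> t < Y \<Longrightarrow> dini_hat mu t \<noteq> 0"
    and t: "0 < t" "t < Y"
  shows "dini_V mu t < dini_V nu t"
proof -
  have mu1: "mu > -1" using nu mu by linarith
  have "dini_V nu t - dini_V mu t > 0"
  proof (rule positive_by_crossing[OF _ _ _ t])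
    show "((\<lambda>t. dini_V nu t - dini_V mu t) has_real_derivative
        riccati_rhs nu t (dini_V nu t) - riccati_rhs mu t (dini_V mu t)) (at t)" if "0 < t" "t < Y" for t
      using that Wn Wm by (intro DERIV_diff dini_V_deriv nu mu1) auto
    have "1 / (2 * (mu + 1)) < 1 / (2 * (nu + 1))"
      using nu mu by (intro divide_strict_left_mono) auto
    then have "\<forall>\<^sub>F t in at_right 0. t * (dini_A nu t - dini_A mu t) > 0"
      using nu mu1 by (intro eventually_pos_at_right_0 continuous_intros dini_A_isCont)
                      (simp_all add: dini_A_0)
    then show "\<forall>\<^sub>F t in at_right 0. dini_V nu t - dini_V mu t > 0"
      unfolding dini_V_eq by (simp add: algebra_simps)
    show "riccati_rhs nu t (dini_V nu t) - riccati_rhs mu t (dini_V mu t) > 0"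
      if t: "0 < t" "t < Y" and eq: "dini_V nu t - dini_V mu t = 0" for t
    proof -
      define v where "v = dini_V nu t"
      have "v > 0" using dini_V_pos[OF nu Wn t] unfolding v_def .
      have "riccati_rhs nu t (dini_V nu t) - riccati_rhs mu t (dini_V mu t)
          = 2 * (mu - nu) * v / t + 2 * (mu - nu) * v^2"
        using eq t unfolding riccati_rhs_def v_def[symmetric] by (simp add: field_simps)
      also have "\<dots> > 0" using \<open>v > 0\<close> mu t by (intro add_pos_pos) auto
      finally show ?thesis .
    qed
  qed
  then show ?thesis by simp
qed

text \<open>Q is positive: at a zero of Q the Riccati equation forces Q' = 3 + 2 t V > 0.\<close>

lemma dini_Q_pos:
  assumes nu: "nu > -1" and W: "\<And>t. 0 < t \<Longrightarrow> t < Y \<Longrightarrow> dini_hat nu t \<noteq> 0"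
    and t: "0 < t" "t < Y"
  shows "dini_Q nu t > 0"
proof (rule positive_by_crossing[where h' = "dini_Q' nu", OF _ _ _ t])
  show "(dini_Q nu has_real_derivative dini_Q' nu t) (at t)" if "0 < t" "t < Y" for t
    using dini_Q_deriv[OF nu] W that by simp
  show "\<forall>\<^sub>F t in at_right 0. dini_Q nu t > 0"
    unfolding dini_Q_eq using nu by (intro eventually_pos_at_right_0 dini_B_isCont) (simp_all add: dini_B_0)
  show "dini_Q' nu t > 0" if t: "0 < t" "t < Y" and zero: "dini_Q nu t = 0" for t
  proof -
    have scaled_V: "(t^2 + 1 - 2 * nu) * dini_V nu t = - t" using zero unfolding dini_Q_def by linarith
    have "(t^2 + 1 - 2 * nu) * riccati_rhs nu t (dini_V nu t) = 2"
      unfolding scaled_riccati_rhs scaled_V using t by (simp add: field_simps power2_eq_square)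
    moreover have "2 * t * dini_V nu t > 0" using dini_V_pos[OF nu W t] t by simp
    ultimately show ?thesis unfolding dini_Q'_def by linarith
  qed
qed

lemma dini_Q_order:
  assumes nu: "nu > -1" and mu: "mu > nu"
    and Wn: "\<And>t. 0 < t \<Longrightarrow> t < Y \<Longrightarrow> dini_hat nu t \<noteq> 0"
    and Wm: "\<And>t. 0 < t \<Longrightarrow> t < Y \<Longrightarrow> dini_hat mu t \<noteq> 0"
    and t: "0 < t" "t < Y"
  shows "dini_Q mu t < dini_Q nu t"
proof -
  have mu1: "mu > -1" using nu mu by linarith
  have "dini_Q nu t - dini_Q mu t > 0"
  proof (rule positive_by_crossing[OF _ _ _ t])
    show "((\<lambda>t. dini_Q nu t - dini_Q mu t) has_real_derivative dini_Q' nu t - dini_Q' mu t) (at t)"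
      if "0 < t" "t < Y" for t
      using that Wn Wm by (intro DERIV_diff dini_Q_deriv nu mu1) auto
    have "3 / (2 * (mu + 1)) < 3 / (2 * (nu + 1))"
      using nu mu by (intro divide_strict_left_mono) auto
    then have "\<forall>\<^sub>F t in at_right 0. t * (dini_B nu t - dini_B mu t) > 0"
      using nu mu1 by (intro eventually_pos_at_right_0 continuous_intros dini_B_isCont)
                      (simp_all add: dini_B_0)
    then show "\<forall>\<^sub>F t in at_right 0. dini_Q nu t - dini_Q mu t > 0"
      unfolding dini_Q_eq by (simp add: algebra_simps)
    show "dini_Q' nu t - dini_Q' mu t > 0"
      if t: "0 < t" "t < Y" and eq: "dini_Q nu t - dini_Q mu t = 0" for t
    proof -
      define c where "c = (t^2 + 1 - 2 * nu) * dini_V nu t"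
      have c_mu: "(t^2 + 1 - 2 * mu) * dini_V mu t = c" using eq unfolding dini_Q_def c_def by linarith
      have "t + c > 0" using dini_Q_pos[OF nu Wn t] unfolding dini_Q_def c_def .
      have "dini_Q' nu t - dini_Q' mu t
          = 2 * t * (dini_V nu t - dini_V mu t) + 2 * (mu - nu) * ((t + c) / t)"
        unfolding dini_Q'_def scaled_riccati_rhs c_def[symmetric] c_mu using t by (simp add: field_simps)
      also have "\<dots> > 0"
        using dini_V_order[OF nu mu Wn Wm t] \<open>t + c > 0\<close> mu t by (intro add_pos_pos) auto
      finally show ?thesis .
    qed
  qed
  then show ?thesis by simp
qed

lemma dini_Q_antimono_order:
  assumes nu: "nu > -1" and mu: "mu \<ge> nu"
    and Wn: "\<And>t. 0 < t \<Longrightarrow> t < Y \<Longrightarrow> dini_hat nu t \<noteq> 0"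
    and Wm: "\<And>t. 0 < t \<Longrightarrow> t < Y \<Longrightarrow> dini_hat mu t \<noteq> 0"
    and t: "0 < t" "t < Y"
  shows "dini_Q mu t \<le> dini_Q nu t"
proof (cases "mu = nu")
  case False
  then show ?thesis using dini_Q_order[OF nu _ Wn Wm t] mu by simp
qed simp

text \<open>Since (W_mu / W_nu)' = (W_mu / W_nu) (Q_nu - Q_mu), the ratio increases as long
  as both functions are positive.\<close>

lemma dini_hat_ratio_mono:
  assumes nu: "nu > -1" and mu: "mu \<ge> nu"
    and Wn: "\<And>t. 0 \<le> t \<Longrightarrow> t < Y \<Longrightarrow> dini_hat nu t > 0"
    and Wm: "\<And>t. 0 \<le> t \<Longrightarrow> t < Y \<Longrightarrow> dini_hat mu t > 0"
    and ab: "0 \<le> a" "a \<le> b" "b < Y"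
  shows "dini_hat mu a / dini_hat nu a \<le> dini_hat mu b / dini_hat nu b"
proof (rule DERIV_nonneg_imp_increasing_open[OF ab(2)])
  have mu1: "mu > -1" using nu mu by linarith
  have nonzero: "dini_hat nu t \<noteq> 0" "dini_hat mu t \<noteq> 0" if "0 < t" "t < Y" for t
    using Wn[of t] Wm[of t] that by auto
  show "\<exists>y. ((\<lambda>t. dini_hat mu t / dini_hat nu t) has_real_derivative y) (at x) \<and> y \<ge> 0"
    if x: "a < x" "x < b" for x
  proof (intro exI conjI)
    have x0: "0 < x" "x < Y" using x ab by linarith+
    have pos: "dini_hat nu x > 0" "dini_hat mu x > 0" using Wn Wm x0 by auto
    show "((\<lambda>t. dini_hat mu t / dini_hat nu t) has_real_derivative
        (dini_hat' mu x * dini_hat nu x - dini_hat mu x * dini_hat' nu x) / (dini_hat nu x * dini_hat nu x)) (at x)"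
      using pos by (intro DERIV_divide dini_hat_deriv nu mu1) simp
    have "dini_Q mu x \<le> dini_Q nu x"
      by (rule dini_Q_antimono_order[OF nu mu nonzero x0])
    then have "dini_hat' mu x * dini_hat nu x - dini_hat mu x * dini_hat' nu x \<ge> 0"
      using pos by (simp add: dini_hat'_eq algebra_simps mult_left_mono)
    then show "(dini_hat' mu x * dini_hat nu x - dini_hat mu x * dini_hat' nu x) / (dini_hat nu x * dini_hat nu x) \<ge> 0"
      by simp
  qed
  show "continuous_on {a..b} (\<lambda>t. dini_hat mu t / dini_hat nu t)"
    using Wn ab by (intro continuous_at_imp_continuous_on ballI continuous_intros dini_hat_isCont nu mu1)
                   (metis atLeastAtMost_iff less_irrefl order.trans le_less_trans)
qed

text \<open>Since W_mu(0) = W_nu(0) = 1, the ratio stays at least 1.\<close>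

lemma dini_hat_ratio_ge_1:
  assumes "nu > -1" "mu \<ge> nu"
    and "\<And>t. 0 \<le> t \<Longrightarrow> t < Y \<Longrightarrow> dini_hat nu t > 0"
    and "\<And>t. 0 \<le> t \<Longrightarrow> t < Y \<Longrightarrow> dini_hat mu t > 0"
    and "0 \<le> t" "t < Y"
  shows "dini_hat mu t / dini_hat nu t \<ge> 1"
  using dini_hat_ratio_mono[OF assms(1-4) order.refl assms(5,6)] by (simp add: dini_hat_0)

text \<open>Positivity of W transfers from order nu to every larger order mu: as long as
  W_mu > 0 the ratio W_mu / W_nu is at least 1, so W_mu cannot reach zero before W_nu does.\<close>

lemma dini_hat_pos_larger_order:
  assumes nu: "nu > -1" and mu: "mu \<ge> nu"
    and Wn: "\<And>t. 0 \<le> t \<Longrightarrow> t < Y \<Longrightarrow> dini_hat nu t > 0"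
    and t: "0 \<le> t" "t < Y"
  shows "dini_hat mu t > 0"
proof (cases "t = 0")
  case False
  have mu1: "mu > -1" using nu mu by linarith
  show ?thesis
  proof (rule positive_continuation[where f = "dini_hat mu"])
    show "isCont (dini_hat mu) s" for s using dini_hat_isCont[OF mu1] .
    show "\<forall>\<^sub>F s in at_right 0. dini_hat mu s > 0"
      by (rule eventually_pos_at_right[OF dini_hat_isCont[OF mu1]]) (simp add: dini_hat_0)
    show "0 < t" "t < Y" using t False by auto
    fix s assume s: "0 < s" "s < Y" and below: "\<And>r. 0 < r \<Longrightarrow> r < s \<Longrightarrow> dini_hat mu r > 0"
    have Wm_s: "dini_hat mu r > 0" if "0 \<le> r" "r < s" for r
      using that below by (cases "r = 0") (auto simp: dini_hat_0)
    have Wn_s: "dini_hat nu r > 0" if "0 \<le> r" "r < s" for r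
      using that s Wn by simp
    have "dini_hat mu s - dini_hat nu s \<ge> 0"
    proof (rule nonneg_at_left_limit[where g = "\<lambda>r. dini_hat mu r - dini_hat nu r"])
      show "isCont (\<lambda>r. dini_hat mu r - dini_hat nu r) s"
        by (intro continuous_intros dini_hat_isCont nu mu1)
      have "dini_hat mu r \<ge> dini_hat nu r" if "0 < r" "r < s" for r
      proof -
        have "dini_hat mu r / dini_hat nu r \<ge> 1"
          using that by (intro dini_hat_ratio_ge_1[OF nu mu Wn_s Wm_s]) auto
        then show ?thesis using Wn_s[of r] that by (simp add: field_simps)
      qed
      then show "\<forall>\<^sub>F r in at_left s. dini_hat mu r - dini_hat nu r \<ge> 0"
        unfolding eventually_at_left_field using s by (intro exI[of _ 0]) auto
    qed
    then show "dini_hat mu s > 0" using Wn[of s] s by simp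
  qed
qed (simp add: dini_hat_0)

lemma dini_nonzero_before_zero1:
  assumes "0 < t" "t < dini_zero1 nu"
  shows "dini nu t \<noteq> 0"
proof
  assume "dini nu t = 0"
  then have "t \<in> {x. 0 < x \<and> dini nu x = 0}" using assms by simp
  moreover have "bdd_below {x. 0 < x \<and> dini nu x = 0}" by (rule bdd_belowI[of _ 0]) auto
  ultimately have "dini_zero1 nu \<le> t" unfolding dini_zero1_def by (rule cInf_lower)
  with assms show False by simp
qed

lemma dini_hat_pos_before_zero1:
  assumes nu: "nu > -1" and mu: "mu \<ge> nu" and t: "0 \<le> t" "t < dini_zero1 nu"
  shows "dini_hat nu t > 0" and "dini_hat mu t > 0"
proof -
  have pos: "dini_hat nu r > 0" if r: "0 \<le> r" "r < dini_zero1 nu" for r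
  proof (rule ccontr)
    assume "\<not> dini_hat nu r > 0"
    then obtain z where z: "0 \<le> z" "z \<le> r" "dini_hat nu z = 0"
      using IVT2[of "dini_hat nu" r 0 0] r dini_hat_0[of nu] dini_hat_isCont[OF nu] by auto
    then have "z > 0" using dini_hat_0[of nu] by (cases "z = 0") auto
    then have "dini nu z = 0" unfolding dini_eq[OF nu \<open>z > 0\<close>] z(3) by simp
    moreover have "dini nu z \<noteq> 0" using dini_nonzero_before_zero1 \<open>z > 0\<close> z(2) r(2) by simp
    ultimately show False by simp
  qed
  then show "dini_hat nu t > 0" using t .
  show "dini_hat mu t > 0" using dini_hat_pos_larger_order[OF nu mu pos t] .
qed

lemma dini_normalized:
  assumes "nu > -1" "x > 0"
  shows "2 powr nu * Gamma (nu + 1) * x powr (-nu) * dini nu x = dini_hat nu x"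
proof -
  have "Gamma (nu + 1) > 0" using assms by simp
  moreover have "x powr (-nu) * x powr nu = 1" using assms by (simp add: powr_minus field_simps)
  ultimately show ?thesis
    unfolding dini_eq[OF assms] bessel_const_def by (simp add: field_simps)
qed

lemma dini_log_deriv:
  assumes nu: "nu > -1" and x: "x > 0" and W: "dini_hat nu x \<noteq> 0"
  shows "deriv (dini nu) x / dini nu x = nu / x - dini_Q nu x"
proof -
  have "bessel_const nu > 0" using bessel_const_pos[OF nu] .
  moreover have "x powr (nu - 1) = x powr nu / x" using x by (simp add: powr_diff)
  ultimately show ?thesis
    unfolding dini_deriv[OF nu x] dini_eq[OF nu x] dini_hat'_eq[OF W]
    using x W by (simp add: field_simps)
qed

lemma dini_ratio_eq:
  assumes nu: "nu > -1" and mu: "mu > -1" and t: "t > 0"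
  shows "dini mu t / dini nu t
    = 2 powr (nu - mu) * (Gamma (nu + 1) / Gamma (mu + 1)) * t powr (mu - nu) * (dini_hat mu t / dini_hat nu t)"
proof (cases "dini_hat nu t = 0")
  case False
  have "Gamma (nu + 1) > 0" "Gamma (mu + 1) > 0" using nu mu by auto
  moreover have "t powr (mu - nu) = t powr mu / t powr nu" "2 powr (nu - mu) = 2 powr nu / 2 powr mu"
    by (simp_all add: powr_diff)
  moreover have "t powr nu > 0" using t by simp
  ultimately show ?thesis
    unfolding dini_eq[OF nu t] dini_eq[OF mu t] bessel_const_def using False by (simp add: field_simps)
qed (simp add: dini_eq[OF nu t])

text \<open>The ratio d_mu / d_nu is increasing below the first zero of d_nu: it is a positive
  constant times the product of the increasing non-negative factors t^(mu - nu) and W_mu / W_nu.\<close>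

lemma dini_ratio_mono:
  assumes nu: "nu > -1" and mu: "mu \<ge> nu"
  shows "mono_on {0<..<dini_zero1 nu} (\<lambda>t. dini mu t / dini nu t)"
proof (rule mono_onI)
  fix r s assume rs: "r \<in> {0<..<dini_zero1 nu}" "s \<in> {0<..<dini_zero1 nu}" "r \<le> s"
  have mu1: "mu > -1" using nu mu by linarith
  define c where "c = 2 powr (nu - mu) * (Gamma (nu + 1) / Gamma (mu + 1))"
  have "c > 0" unfolding c_def using nu mu1 by simp
  note W_pos = dini_hat_pos_before_zero1[OF nu mu]
  have "dini_hat mu r / dini_hat nu r \<le> dini_hat mu s / dini_hat nu s"
    using rs by (intro dini_hat_ratio_mono[OF nu mu W_pos]) auto
  moreover have "dini_hat mu r / dini_hat nu r \<ge> 1"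
    using rs by (intro dini_hat_ratio_ge_1[OF nu mu W_pos]) auto
  ultimately have "c * (r powr (mu - nu) * (dini_hat mu r / dini_hat nu r))
      \<le> c * (s powr (mu - nu) * (dini_hat mu s / dini_hat nu s))"
    using rs \<open>c > 0\<close> mu by (intro mult_left_mono mult_mono powr_mono2) auto
  then show "dini mu r / dini nu r \<le> dini mu s / dini nu s"
    using rs unfolding c_def by (simp only: dini_ratio_eq[OF nu mu1] mult.assoc greaterThanLessThan_iff)
qed

lemma dini_log_deriv_order:
  assumes nu: "nu > -1" and mu: "mu \<ge> nu" and x: "0 < x" "x < dini_zero1 nu"
  shows "deriv (dini nu) x / dini nu x \<le> deriv (dini mu) x / dini mu x"
proof -
  have mu1: "mu > -1" using nu mu by linarith
  have W_nonzero: "dini_hat nu t \<noteq> 0" "dini_hat mu t \<noteq> 0" if "0 < t" "t < dini_zero1 nu" for t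
    using dini_hat_pos_before_zero1[OF nu mu, of t] that by auto
  have "dini_Q mu x \<le> dini_Q nu x"
    by (rule dini_Q_antimono_order[OF nu mu W_nonzero x])
  moreover have "nu / x \<le> mu / x" using mu x by (simp add: divide_right_mono)
  ultimately show ?thesis
    using W_nonzero[OF x] x by (simp add: dini_log_deriv nu mu1)
qed

text \<open>The first two claims compare W_mu(x) with W_nu(x), using W_mu / W_nu \<ge> 1 below the
  first zero of d_nu; the last two are the lemmas above.\<close>

theorem theorem6:
  fixes mu nu x :: real
  assumes "nu > -1" and "mu \<ge> nu"
    and "0 < x" and "x < dini_zero1 nu"
  shows "(2 powr mu * Gamma (mu + 1) * x powr (-mu) * dini mu x
           \<ge> 2 powr nu * Gamma (nu + 1) * x powr (-nu) * dini nu x)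
    \<and> (x powr (nu - mu) * (dini mu x / dini nu x) \<ge> 2 powr (nu - mu) * (Gamma (nu + 1) / Gamma (mu + 1)))
    \<and> (deriv (dini mu) x / dini mu x \<ge> deriv (dini nu) x / dini nu x)
    \<and> mono_on {0<..<dini_zero1 nu} (\<lambda>t. dini mu t / dini nu t)"
proof -
  note nu = assms(1) and mu = assms(2) and x = assms(3,4)
  have mu1: "mu > -1" using nu mu by linarith
  define c where "c = 2 powr (nu - mu) * (Gamma (nu + 1) / Gamma (mu + 1))"
  have "c > 0" unfolding c_def using nu mu1 by simp
  note W_pos = dini_hat_pos_before_zero1[OF nu mu _ x(2)]
  have W_ratio: "dini_hat mu x / dini_hat nu x \<ge> 1"
    using x by (intro dini_hat_ratio_ge_1[OF nu mu dini_hat_pos_before_zero1[OF nu mu]]) auto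
  then have "dini_hat mu x \<ge> dini_hat nu x" using W_pos x by (simp add: field_simps)
  then have part1: "2 powr mu * Gamma (mu + 1) * x powr (-mu) * dini mu x
      \<ge> 2 powr nu * Gamma (nu + 1) * x powr (-nu) * dini nu x"
    unfolding dini_normalized[OF nu x(1)] dini_normalized[OF mu1 x(1)] .
  have "x powr (nu - mu) * (dini mu x / dini nu x) = c * (dini_hat mu x / dini_hat nu x)"
    unfolding dini_ratio_eq[OF nu mu1 x(1)] c_def using x(1) by (simp add: powr_add[symmetric])
  then have part2: "x powr (nu - mu) * (dini mu x / dini nu x) \<ge> c"
    using mult_left_mono[OF W_ratio less_imp_le[OF \<open>c > 0\<close>]] by simp
  show ?thesis
    using part1 part2 dini_log_deriv_order[OF nu mu x] dini_ratio_mono[OF nu mu]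
    unfolding c_def by blast
qed

end
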